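(* Let $\omega_1,\dots,\omega_n$ be non-zero real numbers, let $\tilde{\Delta} = \sum_{i=1}^n \omega_i \partial_{x_i}^2$, and let $k$ be a natural number. Let $q \in C^1(\mathbb{R}^n,\mathbb{R})$ be a scalar function such that there exists $m \le n$ with $q(\mathbf{x}) = f(x_m)\cdot \mathbf{x}_{i\neq m}^{\beta}$ for a multi-index $\beta \in \mathbb{N}_0^{n-1}$ and a function $f$ of the single variable $x_m$. Set $\lambda = \left\lceil \frac{|\beta|-1}{2}\right\rceil$ and $$W(\mathbf{x}) = \omega_m^{-\lambda-k}\, \mathcal{A}_{x_m}^{2\lambda+2k} q(\mathbf{x}) = \omega_m^{-\lambda-k}\, \mathbf{x}_{i\neq m}^{\beta}\, \mathcal{A}_{x_m}^{2\lambda+2k} f(x_m).$$ Then the function $$Q(\mathbf{x}) := \sum_{p=0}^{\lambda} (-1)^p \binom{k+p-1}{p} \omega_m^{\lambda-p}\, \partial_{x_m}^{2\lambda-2p}\, \tilde{\Delta}_{\setminus m}^{p} W(\mathbf{x}) = \sum_{p=0}^{\lambda} (-1)^p \binom{k+p-1}{p} \omega_m^{-p-k}\, \mathcal{A}_{x_m}^{2k+2p}\, \tilde{\Delta}_{\setminus m}^{p} q(\mathbf{x})$$ satisfies $\tilde{\Delta}^k Q = q$. In particular, for $k=1$, $$Q(\mathbf{x}) := \sum_{p=0}^{\lambda} (-1)^p \omega_m^{\lambda-p}\, \partial_{x_m}^{2\lambda-2p}\, \tilde{\Delta}_{\setminus m}^{p} W(\mathbf{x}) = \sum_{p=0}^{\lambda}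 (-1)^p \omega_m^{-p-1}\, \mathcal{A}_{x_m}^{2+2p}\, \tilde{\Delta}_{\setminus m}^{p} q(\mathbf{x})$$ satisfies $\tilde{\Delta} Q = q$.
   Context: $\mathbf{x}_{i\neq m}^{\beta}$ denotes the monomial $\prod_{i\neq m} x_i^{\beta_i}$ in the variables other than $x_m$, and $|\beta|$ is its total degree; $\lceil h\rceil$ is the least integer $\ge h$. The incomplete generalized Laplacian is $\tilde{\Delta}_{\setminus m} f := \sum_{i\neq m}\omega_i\partial_{x_i}^2 f$, with $\tilde{\Delta}_{\setminus m}^p$ its $p$-fold application. The antiderivative with respect to $x_j$ is $\mathcal{A}_{x_j} f(\mathbf{x}) := \int_{x_0}^{x_j} f(x_1,\dots,\xi_j,\dots,x_n)\, d\xi_j$ with a freely chosen lower limit $x_0$, and $\mathcal{A}_{x_j}^p := \mathcal{A}_{x_j}^{p-1}\mathcal{A}_{x_j}$, i.e. $\mathcal{A}_{x_j}^p f(\mathbf{x}) = \frac{1}{(p-1)!}\int_{x_0}^{x_j}(x_j-t_j)^{p-1} f(\dots,t_j,\dots)\,dt_j$. By convention all zeroth powers of these operators are the identity and $\partial_{x_j}^p\mathcal{A}_{x_j}^p f = f$. *)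

theory Defs
  imports "HOL-Analysis.Analysis"
begin

definition vupd :: "real ^ 'n \<Rightarrow> 'n \<Rightarrow> real \<Rightarrow> real ^ 'n" where
  "vupd x j t = (\<chi> i. if i = j then t else x $ i)"

definition pdiff :: "'n \<Rightarrow> (real ^ 'n \<Rightarrow> real) \<Rightarrow> real ^ 'n \<Rightarrow> real" where
  "pdiff j F x = deriv (\<lambda>t. F (vupd x j t)) (x $ j)"

definition glap :: "('n \<Rightarrow> real) \<Rightarrow> (real ^ 'n \<Rightarrow> real) \<Rightarrow> real ^ 'n \<Rightarrow> real" where
  "glap \<omega> F x = (\<Sum>i\<in>UNIV. \<omega> i * pdiff i (pdiff i F) x)"

definition glap_wo :: "('n \<Rightarrow> real) \<Rightarrow> 'n \<Rightarrow> (real ^ 'n \<Rightarrow> real) \<Rightarrow> real ^ 'n \<Rightarrow> real" where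
  "glap_wo \<omega> m F x = (\<Sum>i\<in>UNIV - {m}. \<omega> i * pdiff i (pdiff i F) x)"

definition oint :: "real \<Rightarrow> real \<Rightarrow> (real \<Rightarrow> real) \<Rightarrow> real" where
  "oint a b g = (if a \<le> b then integral {a..b} g else - integral {b..a} g)"

definition antideriv1 :: "real \<Rightarrow> (real \<Rightarrow> real) \<Rightarrow> real \<Rightarrow> real" where
  "antideriv1 x0 g t = oint x0 t g"

definition antideriv :: "'n \<Rightarrow> real \<Rightarrow> (real ^ 'n \<Rightarrow> real) \<Rightarrow> real ^ 'n \<Rightarrow> real" where
  "antideriv j x0 F x = oint x0 (x $ j) (\<lambda>s. F (vupd x j s))"

definition mono_wo :: "('n \<Rightarrow> nat) \<Rightarrow> 'n \<Rightarrow> real ^ 'n \<Rightarrow> real" where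
  "mono_wo \<beta> m x = (\<Prod>i\<in>UNIV - {m}. (x $ i) ^ \<beta> i)"

definition deg_wo :: "('n \<Rightarrow> nat) \<Rightarrow> 'n \<Rightarrow> nat" where
  "deg_wo \<beta> m = (\<Sum>i\<in>UNIV - {m}. \<beta> i)"

end

theory Submission
  imports Defs
begin

(* Write q = M(x') f(x_m), where M is a polynomial of degree b in the variables x' other than
   x_m, and split the generalized Laplacian as omega_m d_m^2 + L with L the incomplete one.
   L lowers the degree of M by two, so L^(lam+1) M = 0, while d_m^2 cancels two antiderivatives
   of f. Applied to T_(j+1) = Sum_(p <= lam) c_(j+1,p) (L^p M) (A^(2j+2+2p) f)  (glap_series below)
   the Laplacian therefore gives Sum_p (omega_m c_(j+1,p) + c_(j+1,p-1)) (L^p M) (A^(2j+2p) f),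
   and for c_(j,p) = (-1)^p C(j+p-1, p) omega_m^(-p-j) Pascal's rule turns this into T_j.
   As T_0 = q and Q = T_k, the k-th power of the Laplacian maps Q to q. *)

subsection \<open>Partial derivatives\<close>

lemma vupd_nth [simp]: "vupd x j t $ i = (if i = j then t else x $ i)"
  by (simp add: vupd_def)

lemma continuous_on_vupd: "continuous_on UNIV (vupd x j)"
  unfolding vupd_def
proof (rule continuous_on_vec_lambda)
  show "continuous_on UNIV (\<lambda>t. if i = j then t else x $ i)" for i
    by (cases "i = j") (simp_all add: continuous_on_id continuous_on_const)
qed

definition has_pdiff :: "'n \<Rightarrow> (real ^ 'n \<Rightarrow> real) \<Rightarrow> (real ^ 'n \<Rightarrow> real) \<Rightarrow> bool" where
  "has_pdiff i F F' \<longleftrightarrow> (\<forall>x. ((\<lambda>t. F (vupd x i t)) has_real_derivative F' x) (at (x $ i)))"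

lemma pdiff_eqI: "has_pdiff i F F' \<Longrightarrow> pdiff i F = F'"
  unfolding has_pdiff_def pdiff_def by (auto intro: DERIV_imp_deriv)

lemma pdiff2_eqI: "has_pdiff i G G' \<and> has_pdiff i G' G'' \<Longrightarrow> pdiff i (pdiff i G) = G''"
  by (metis pdiff_eqI)

lemma has_pdiff_sum:
  assumes "finite S" "\<And>s. s \<in> S \<Longrightarrow> has_pdiff i (G s) (G' s)"
  shows "has_pdiff i (\<lambda>x. \<Sum>s\<in>S. G s x) (\<lambda>x. \<Sum>s\<in>S. G' s x)"
  using assms unfolding has_pdiff_def by (auto intro: DERIV_sum)

lemma pdiff2_sum:
  assumes "finite S" "\<And>s. s \<in> S \<Longrightarrow> has_pdiff i (G s) (G' s) \<and> has_pdiff i (G' s) (G'' s)"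
  shows "pdiff i (pdiff i (\<lambda>x. \<Sum>s\<in>S. G s x)) = (\<lambda>x. \<Sum>s\<in>S. G'' s x)"
  using assms by (intro pdiff2_eqI[where G' = "\<lambda>x. \<Sum>s\<in>S. G' s x"] conjI has_pdiff_sum) auto

lemma has_pdiff_mult_right:
  assumes "i \<noteq> m" "has_pdiff i M M'"
  shows "has_pdiff i (\<lambda>x. M x * h (x $ m)) (\<lambda>x. M' x * h (x $ m))"
  using assms unfolding has_pdiff_def by (auto intro: DERIV_cmult_right)

lemma has_pdiff_mult_left:
  assumes "\<And>x t. M (vupd x m t) = M x" "\<And>t. (h has_real_derivative h' t) (at t)"
  shows "has_pdiff m (\<lambda>x. M x * h (x $ m)) (\<lambda>x. M x * h' (x $ m))"
  using assms unfolding has_pdiff_def by (auto intro: DERIV_cmult)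

lemma glap_eq_pdiff2_plus_glap_wo:
  "glap \<omega> F x = \<omega> m * pdiff m (pdiff m F) x + glap_wo \<omega> m F x"
  unfolding glap_def glap_wo_def by (subst sum.remove[of _ m]) auto

subsection \<open>Polynomials in the variables other than the distinguished one\<close>

lemma mono_wo_vupd_same [simp]: "mono_wo \<alpha> m (vupd x m t) = mono_wo \<alpha> m x"
  unfolding mono_wo_def by (rule prod.cong) auto

lemma mono_wo_remove:
  "i \<noteq> m \<Longrightarrow> mono_wo \<alpha> m x = x $ i ^ \<alpha> i * (\<Prod>j\<in>UNIV - {m} - {i}. x $ j ^ \<alpha> j)"
  unfolding mono_wo_def by (subst prod.remove[of _ i]) auto

lemma deg_wo_remove:
  fixes \<alpha> :: "'n::finite \<Rightarrow> nat"
  shows "i \<noteq> m \<Longrightarrow> deg_wo \<alpha> m = \<alpha> i + (\<Sum>j\<in>UNIV - {m} - {i}. \<alpha> j)"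
  unfolding deg_wo_def by (subst sum.remove[of _ i]) auto

lemma has_pdiff_mono_wo:
  fixes \<alpha> :: "'n::finite \<Rightarrow> nat"
  assumes "i \<noteq> m"
  shows "has_pdiff i (mono_wo \<alpha> m) (\<lambda>x. real (\<alpha> i) * mono_wo (\<alpha>(i := \<alpha> i - 1)) m x)"
  unfolding has_pdiff_def
proof
  fix x :: "real ^ 'n"
  define R where "R = (\<Prod>j\<in>UNIV - {m} - {i}. x $ j ^ \<alpha> j)"
  have "(\<Prod>j\<in>UNIV - {m} - {i}. vupd x i t $ j ^ \<alpha> j) = R" for t
    unfolding R_def by (rule prod.cong) auto
  then have "(\<lambda>t. mono_wo \<alpha> m (vupd x i t)) = (\<lambda>t. t ^ \<alpha> i * R)"
    using mono_wo_remove[OF assms] by auto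
  moreover have "(\<Prod>j\<in>UNIV - {m} - {i}. x $ j ^ (\<alpha>(i := \<alpha> i - 1)) j) = R"
    unfolding R_def by (rule prod.cong) auto
  then have "mono_wo (\<alpha>(i := \<alpha> i - 1)) m x = x $ i ^ (\<alpha> i - 1) * R"
    using mono_wo_remove[OF assms] by simp
  ultimately show "((\<lambda>t. mono_wo \<alpha> m (vupd x i t)) has_real_derivative
      real (\<alpha> i) * mono_wo (\<alpha>(i := \<alpha> i - 1)) m x) (at (x $ i))"
    by (auto intro!: derivative_eq_intros)
qed

text \<open>The degree is an integer so that a negative bound characterises the zero function.\<close>

inductive poly_wo :: "'n \<Rightarrow> int \<Rightarrow> (real ^ 'n \<Rightarrow> real) \<Rightarrow> bool" for m d where
  poly_wo_monomial: "int (deg_wo \<alpha> m) \<le> d \<Longrightarrow> poly_wo m d (mono_wo \<alpha> m)"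
| poly_wo_zero: "poly_wo m d (\<lambda>x. 0)"
| poly_wo_add: "poly_wo m d P \<Longrightarrow> poly_wo m d Q \<Longrightarrow> poly_wo m d (\<lambda>x. P x + Q x)"
| poly_wo_smult: "poly_wo m d P \<Longrightarrow> poly_wo m d (\<lambda>x. c * P x)"

lemma poly_wo_mono_wo_ceiling:
  "poly_wo m (2 * int (nat \<lceil>(real (deg_wo \<beta> m) - 1) / 2\<rceil>) + 1) (mono_wo \<beta> m)"
proof -
  have "real (deg_wo \<beta> m) \<le> real (2 * l + 1)" if "(real (deg_wo \<beta> m) - 1) / 2 \<le> real l" for l
    using that by simp
  then have "real (deg_wo \<beta> m) \<le> real (2 * nat \<lceil>(real (deg_wo \<beta> m) - 1) / 2\<rceil> + 1)"
    using real_nat_ceiling_ge by blast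
  then show ?thesis
    by (intro poly_wo_monomial) (simp only: of_nat_le_iff)
qed

lemma poly_wo_vupd_same: "poly_wo m d P \<Longrightarrow> P (vupd x m t) = P x"
  by (induction rule: poly_wo.induct) auto

lemma poly_wo_negative: "poly_wo m d P \<Longrightarrow> d < 0 \<Longrightarrow> P = (\<lambda>x. 0)"
  by (induction rule: poly_wo.induct) auto

lemma poly_wo_sum:
  "finite S \<Longrightarrow> (\<And>s. s \<in> S \<Longrightarrow> poly_wo m d (P s)) \<Longrightarrow> poly_wo m d (\<lambda>x. \<Sum>s\<in>S. P s x)"
  by (induction rule: finite_induct) (auto intro: poly_wo.intros)

lemma poly_wo_has_pdiff:
  assumes "poly_wo m d P" "i \<noteq> m"
  shows "has_pdiff i P (pdiff i P) \<and> poly_wo m (d - 1) (pdiff i P)"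
proof -
  have "\<exists>P'. has_pdiff i P P' \<and> poly_wo m (d - 1) P'"
    using assms
  proof (induction rule: poly_wo.induct)
    case (poly_wo_monomial \<alpha>)
    show ?case
    proof (cases "\<alpha> i = 0")
      case True
      then show ?thesis
        using has_pdiff_mono_wo[OF \<open>i \<noteq> m\<close>, of \<alpha>] by (auto intro: poly_wo.poly_wo_zero)
    next
      case False
      then have "int (deg_wo (\<alpha>(i := \<alpha> i - 1)) m) \<le> d - 1"
        using poly_wo_monomial.hyps deg_wo_remove[OF \<open>i \<noteq> m\<close>, of \<alpha>]
          deg_wo_remove[OF \<open>i \<noteq> m\<close>, of "\<alpha>(i := \<alpha> i - 1)"] by simp
      then show ?thesis
        using has_pdiff_mono_wo[OF \<open>i \<noteq> m\<close>, of \<alpha>] by (blast intro: poly_wo.intros)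
    qed
  next
    case poly_wo_zero
    then show ?case by (auto simp: has_pdiff_def intro!: exI[of _ "\<lambda>x. 0"] poly_wo.poly_wo_zero)
  next
    case (poly_wo_add P Q)
    then obtain P' Q' where "has_pdiff i P P'" "poly_wo m (d - 1) P'"
      and "has_pdiff i Q Q'" "poly_wo m (d - 1) Q'" by blast
    then show ?case
      unfolding has_pdiff_def
      by (auto intro!: exI[of _ "\<lambda>x. P' x + Q' x"] poly_wo.poly_wo_add DERIV_add)
  next
    case (poly_wo_smult P c)
    then obtain P' where "has_pdiff i P P'" "poly_wo m (d - 1) P'" by blast
    then show ?case
      unfolding has_pdiff_def
      by (auto intro!: exI[of _ "\<lambda>x. c * P' x"] poly_wo.poly_wo_smult DERIV_cmult)
  qed
  then show ?thesis using pdiff_eqI by blast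
qed

lemma poly_wo_glap_wo:
  assumes "poly_wo m d P"
  shows "poly_wo m (d - 2) (glap_wo \<omega> m P)"
proof -
  have "poly_wo m (d - 1 - 1) (pdiff i (pdiff i P))" if "i \<noteq> m" for i
    using assms that by (blast dest: poly_wo_has_pdiff[THEN conjunct2])
  then show ?thesis
    unfolding glap_wo_def by (auto intro!: poly_wo_sum poly_wo.poly_wo_smult)
qed

lemma poly_wo_glap_wo_pow: "poly_wo m d P \<Longrightarrow> poly_wo m (d - 2 * int p) ((glap_wo \<omega> m ^^ p) P)"
  by (induction p) (auto dest: poly_wo_glap_wo[where \<omega> = \<omega>] simp: algebra_simps)

lemma has_pdiff2_mult_right:
  assumes "poly_wo m d M" "i \<noteq> m"
  shows "has_pdiff i (\<lambda>x. M x * h (x $ m)) (\<lambda>x. pdiff i M x * h (x $ m))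
    \<and> has_pdiff i (\<lambda>x. pdiff i M x * h (x $ m)) (\<lambda>x. pdiff i (pdiff i M) x * h (x $ m))"
  using poly_wo_has_pdiff[OF assms] poly_wo_has_pdiff[of m "d - 1" "pdiff i M", OF _ assms(2)]
  by (auto intro: has_pdiff_mult_right[OF assms(2)])

lemma has_pdiff2_mult_left:
  assumes "\<And>x t. M (vupd x m t) = M x"
    and "\<And>t. (h has_real_derivative h' t) (at t)" "\<And>t. (h' has_real_derivative h'' t) (at t)"
  shows "has_pdiff m (\<lambda>x. M x * h (x $ m)) (\<lambda>x. M x * h' (x $ m))
    \<and> has_pdiff m (\<lambda>x. M x * h' (x $ m)) (\<lambda>x. M x * h'' (x $ m))"
  using assms by (simp add: has_pdiff_mult_left)

lemma glap_wo_mult: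
  assumes "poly_wo m d M"
  shows "glap_wo \<omega> m (\<lambda>x. M x * h (x $ m)) = (\<lambda>x. glap_wo \<omega> m M x * h (x $ m))"
proof -
  have "pdiff i (pdiff i (\<lambda>x. M x * h (x $ m))) = (\<lambda>x. pdiff i (pdiff i M) x * h (x $ m))"
    if "i \<noteq> m" for i
    using has_pdiff2_mult_right[OF assms that] by (rule pdiff2_eqI)
  then show ?thesis
    unfolding glap_wo_def sum_distrib_right by (auto intro!: sum.cong simp: mult.assoc)
qed

lemma glap_wo_pow_mult:
  "poly_wo m d M \<Longrightarrow>
    (glap_wo \<omega> m ^^ p) (\<lambda>x. M x * h (x $ m)) = (\<lambda>x. (glap_wo \<omega> m ^^ p) M x * h (x $ m))"
  by (induction p) (auto simp: glap_wo_mult[OF poly_wo_glap_wo_pow])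

lemma glap_sum_mult:
  assumes "finite S" "\<And>s. s \<in> S \<Longrightarrow> poly_wo m (d s) (M s)"
    and "\<And>s t. s \<in> S \<Longrightarrow> (h s has_real_derivative h' s t) (at t)"
    and "\<And>s t. s \<in> S \<Longrightarrow> (h' s has_real_derivative h'' s t) (at t)"
  shows "glap \<omega> (\<lambda>x. \<Sum>s\<in>S. M s x * h s (x $ m)) x
    = (\<Sum>s\<in>S. \<omega> m * (M s x * h'' s (x $ m)) + glap_wo \<omega> m (M s) x * h s (x $ m))"
proof -
  let ?G = "\<lambda>x. \<Sum>s\<in>S. M s x * h s (x $ m)"
  have pdiff_m: "pdiff m (pdiff m ?G) = (\<lambda>x. \<Sum>s\<in>S. M s x * h'' s (x $ m))"
    using assms poly_wo_vupd_same
    by (intro pdiff2_sum[where G' = "\<lambda>s x. M s x * h' s (x $ m)"] has_pdiff2_mult_left) blast+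
  have pdiff_other:
    "pdiff i (pdiff i ?G) = (\<lambda>x. \<Sum>s\<in>S. pdiff i (pdiff i (M s)) x * h s (x $ m))"
    if "i \<noteq> m" for i
    using assms(1,2) has_pdiff2_mult_right[OF _ that] by (intro pdiff2_sum) blast+
  have "glap_wo \<omega> m ?G x
      = (\<Sum>i\<in>UNIV - {m}. \<Sum>s\<in>S. \<omega> i * pdiff i (pdiff i (M s)) x * h s (x $ m))"
    unfolding glap_wo_def by (intro sum.cong) (auto simp: pdiff_other sum_distrib_left mult.assoc)
  also have "\<dots> = (\<Sum>s\<in>S. glap_wo \<omega> m (M s) x * h s (x $ m))"
    unfolding glap_wo_def sum_distrib_right by (rule sum.swap)
  finally show ?thesis
    by (simp add: glap_eq_pdiff2_plus_glap_wo[of _ _ _ m] pdiff_m sum_distrib_left sum.distrib)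
qed

subsection \<open>Iterated antiderivatives\<close>

lemma oint_eq_integral_diff:
  fixes g :: "real \<Rightarrow> real"
  assumes "c \<le> x0" "c \<le> t" "g integrable_on {c..max t x0}"
  shows "oint x0 t g = integral {c..t} g - integral {c..x0} g"
  using integral_minus_sets[OF assms(2,1,3)] by (auto simp: oint_def)

lemma has_real_derivative_oint:
  fixes g :: "real \<Rightarrow> real"
  assumes g: "continuous_on UNIV g"
  shows "((\<lambda>s. oint x0 s g) has_real_derivative g t) (at t)"
proof -
  define c where "c = min x0 t - 1"
  define b where "b = max x0 t + 1"
  have "((\<lambda>s. integral {c..s} g) has_real_derivative g t) (at t within {c..b})"
    by (rule integral_has_real_derivative) (auto simp: c_def b_def intro: continuous_on_subset[OF g])
  moreover have "at t within {c..b} = at t"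
    by (rule at_within_interior) (auto simp: c_def b_def)
  ultimately have "((\<lambda>s. integral {c..s} g - integral {c..x0} g) has_real_derivative g t) (at t)"
    using DERIV_diff[OF _ DERIV_const] by fastforce
  then show ?thesis
  proof (rule has_field_derivative_transform_within_open[of _ _ _ "{c<..<b}"])
    fix s assume "s \<in> {c<..<b}"
    then show "integral {c..s} g - integral {c..x0} g = oint x0 s g"
      using continuous_on_subset[OF g]
      by (intro oint_eq_integral_diff[symmetric] integrable_continuous_real) (auto simp: c_def)
  qed (auto simp: c_def b_def)
qed

lemma continuous_on_of_separated:
  assumes "continuous_on UNIV q" "\<And>x. q x = f (x $ m) * mono_wo \<beta> m x"
  shows "continuous_on UNIV f"
proof -
  have "f = (\<lambda>t. q (vupd (\<chi> i. 1) m t))"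
    by (simp add: assms(2) mono_wo_def)
  then show ?thesis
    using continuous_on_compose2[OF assms(1) continuous_on_vupd] by auto
qed

definition antideriv_chain :: "(nat \<Rightarrow> real \<Rightarrow> real) \<Rightarrow> bool" where
  "antideriv_chain F \<longleftrightarrow> (\<forall>j t. (F (Suc j) has_real_derivative F j t) (at t))"

lemma antideriv_chain_cmult: "antideriv_chain F \<Longrightarrow> antideriv_chain (\<lambda>j t. c * F j t)"
  unfolding antideriv_chain_def by (auto intro: DERIV_cmult)

lemma antideriv_chain_antideriv1:
  assumes "continuous_on UNIV f"
  shows "antideriv_chain (\<lambda>j. (antideriv1 x0 ^^ j) f)"
proof -
  have "continuous_on UNIV ((antideriv1 x0 ^^ j) f)
    \<and> (\<forall>t. ((antideriv1 x0 ^^ Suc j) f has_real_derivative (antideriv1 x0 ^^ j) f t) (at t))" for j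
  proof (induction j)
    case 0
    then show ?case
      using assms has_real_derivative_oint[OF assms] by (simp add: antideriv1_def[abs_def])
  next
    case (Suc j)
    then have "continuous_on UNIV ((antideriv1 x0 ^^ Suc j) f)"
      by (intro continuous_at_imp_continuous_on) (auto intro: DERIV_isCont)
    then show ?case
      using has_real_derivative_oint by (auto simp: antideriv1_def[abs_def])
  qed
  then show ?thesis unfolding antideriv_chain_def by blast
qed

lemma antideriv_mult:
  "(\<And>x t. M (vupd x m t) = M x) \<Longrightarrow>
    antideriv m x0 (\<lambda>x. M x * h (x $ m)) = (\<lambda>x. M x * antideriv1 x0 h (x $ m))"
  by (rule ext) (simp add: antideriv_def antideriv1_def oint_def)

lemma antideriv_pow_mult:
  "(\<And>x t. M (vupd x m t) = M x) \<Longrightarrow>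
    (antideriv m x0 ^^ j) (\<lambda>x. M x * h (x $ m)) = (\<lambda>x. M x * (antideriv1 x0 ^^ j) h (x $ m))"
  by (induction j) (simp_all add: antideriv_mult)

lemma pdiff_pow_mult:
  assumes "\<And>x t. M (vupd x m t) = M x" "antideriv_chain F"
  shows "(pdiff m ^^ r) (\<lambda>x. M x * F (r + j) (x $ m)) = (\<lambda>x. M x * F j (x $ m))"
proof (induction r arbitrary: j)
  case (Suc r)
  have "pdiff m (\<lambda>x. M x * F (Suc j) (x $ m)) = (\<lambda>x. M x * F j (x $ m))"
    using assms unfolding antideriv_chain_def by (blast intro: pdiff_eqI has_pdiff_mult_left)
  then show ?case
    using Suc[of "Suc j"] by simp
qed simp

lemma antideriv_pow_glap_wo_pow_mult:
  assumes "poly_wo m d M"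
  shows "(antideriv m x0 ^^ j) ((glap_wo \<omega> m ^^ p) (\<lambda>x. M x * h (x $ m)))
    = (\<lambda>x. (glap_wo \<omega> m ^^ p) M x * (antideriv1 x0 ^^ j) h (x $ m))"
  using assms
  by (simp add: glap_wo_pow_mult antideriv_pow_mult poly_wo_vupd_same[OF poly_wo_glap_wo_pow])

lemma pdiff_pow_glap_wo_pow_mult:
  assumes "poly_wo m d M" "antideriv_chain F"
  shows "(pdiff m ^^ r) ((glap_wo \<omega> m ^^ p) (\<lambda>x. M x * F (r + j) (x $ m)))
    = (\<lambda>x. (glap_wo \<omega> m ^^ p) M x * F j (x $ m))"
  using assms
  by (simp add: glap_wo_pow_mult pdiff_pow_mult poly_wo_vupd_same[OF poly_wo_glap_wo_pow])

subsection \<open>Inverting the generalized Laplacian\<close>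

definition glap_coeff :: "real \<Rightarrow> nat \<Rightarrow> nat \<Rightarrow> real" where
  "glap_coeff w j p = (-1) ^ p * real ((j + p - 1) choose p) / w ^ (p + j)"

lemma glap_coeff_0_left: "glap_coeff w 0 p = (if p = 0 then 1 else 0)"
  by (simp add: glap_coeff_def)

lemma glap_coeff_Suc_0: "w \<noteq> 0 \<Longrightarrow> w * glap_coeff w (Suc j) 0 = glap_coeff w j 0"
  by (simp add: glap_coeff_def)

lemma glap_coeff_Suc_Suc:
  assumes "w \<noteq> 0"
  shows "w * glap_coeff w (Suc j) (Suc p) + glap_coeff w (Suc j) p = glap_coeff w j (Suc p)"
  using assms by (simp add: glap_coeff_def field_simps)

lemma glap_coeff_eq_power_int:
  "glap_coeff w j p = (-1) ^ p * real ((j + p - 1) choose p) * w powi (- int (p + j))"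
  by (simp only: glap_coeff_def divide_inverse power_int_minus power_int_of_nat)

lemma sum_atMost_collect_shifted:
  fixes a b c u :: "nat \<Rightarrow> 'a::comm_ring"
  assumes "a 0 = c 0" "\<And>p. a (Suc p) + b p = c (Suc p)"
  shows "(\<Sum>p\<le>n. a p * u p + b p * u (Suc p)) = (\<Sum>p\<le>n. c p * u p) + b n * u (Suc n)"
  by (induction n) (simp_all add: assms(1) flip: assms(2) add: algebra_simps)

definition glap_series ::
    "('n \<Rightarrow> real) \<Rightarrow> 'n \<Rightarrow> nat \<Rightarrow> (real ^ 'n \<Rightarrow> real) \<Rightarrow> (nat \<Rightarrow> real \<Rightarrow> real) \<Rightarrow> nat
      \<Rightarrow> real ^ 'n \<Rightarrow> real" where
  "glap_series \<omega> m lam M F j x =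
    (\<Sum>p\<le>lam. (glap_wo \<omega> m ^^ p) M x * (glap_coeff (\<omega> m) j p * F (2 * j + 2 * p) (x $ m)))"

lemma glap_series_0: "glap_series \<omega> m lam M F 0 = (\<lambda>x. M x * F 0 (x $ m))"
proof
  fix x
  have "glap_series \<omega> m lam M F 0 x = (\<Sum>p\<le>lam. if p = 0 then M x * F 0 (x $ m) else 0)"
    unfolding glap_series_def by (intro sum.cong) (simp_all add: glap_coeff_0_left)
  then show "glap_series \<omega> m lam M F 0 x = M x * F 0 (x $ m)"
    by simp
qed

lemma glap_glap_series_Suc:
  assumes \<omega>: "\<omega> m \<noteq> 0" and M: "poly_wo m (2 * int lam + 1) M" and F: "antideriv_chain F"
  shows "glap \<omega> (glap_series \<omega> m lam M F (Suc j)) = glap_series \<omega> m lam M F j"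
proof
  fix x
  let ?M = "\<lambda>p. (glap_wo \<omega> m ^^ p) M"
  let ?c = "glap_coeff (\<omega> m) (Suc j)"
  define u where "u p = ?M p x * F (2 * j + 2 * p) (x $ m)" for p
  have "?M (Suc lam) = (\<lambda>x. 0)"
    using poly_wo_glap_wo_pow[OF M, of "Suc lam"] by (rule poly_wo_negative) simp
  then have u_vanishes: "u (Suc lam) = 0"
    by (simp add: u_def)
  have "glap \<omega> (glap_series \<omega> m lam M F (Suc j)) x
      = (\<Sum>p\<le>lam. \<omega> m * (?M p x * (?c p * F (2 * j + 2 * p) (x $ m)))
          + ?M (Suc p) x * (?c p * F (2 * Suc j + 2 * p) (x $ m)))"
    unfolding glap_series_def
  proof (subst glap_sum_mult)
    show "poly_wo m (2 * int lam + 1 - 2 * int p) (?M p)" for p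
      using M by (rule poly_wo_glap_wo_pow)
    show "((\<lambda>t. ?c p * F (2 * Suc j + 2 * p) t) has_real_derivative
        ?c p * F (Suc (2 * j + 2 * p)) t) (at t)"
      and "((\<lambda>t. ?c p * F (Suc (2 * j + 2 * p)) t) has_real_derivative
        ?c p * F (2 * j + 2 * p) t) (at t)" for p t
      using F unfolding antideriv_chain_def by (auto intro: DERIV_cmult)
  qed simp_all
  also have "\<dots> = (\<Sum>p\<le>lam. (\<omega> m * ?c p) * u p + ?c p * u (Suc p))"
    by (intro sum.cong) (simp_all add: u_def mult_ac)
  also have "\<dots> = (\<Sum>p\<le>lam. glap_coeff (\<omega> m) j p * u p)"
    using sum_atMost_collect_shifted[of "\<lambda>p. \<omega> m * ?c p" "glap_coeff (\<omega> m) j" ?c]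
      glap_coeff_Suc_0[OF \<omega>] glap_coeff_Suc_Suc[OF \<omega>] u_vanishes by simp
  also have "\<dots> = glap_series \<omega> m lam M F j x"
    by (simp add: glap_series_def u_def mult_ac)
  finally show "glap \<omega> (glap_series \<omega> m lam M F (Suc j)) x = glap_series \<omega> m lam M F j x" .
qed

lemma glap_pow_glap_series:
  assumes "\<omega> m \<noteq> 0" "poly_wo m (2 * int lam + 1) M" "antideriv_chain F"
  shows "(glap \<omega> ^^ k) (glap_series \<omega> m lam M F k) = (\<lambda>x. M x * F 0 (x $ m))"
  using assms by (induction k)
    (simp_all add: glap_series_0 glap_glap_series_Suc del: funpow.simps add: funpow_Suc_right)

lemma power_mult_power_int_minus:
  assumes "(w::real) \<noteq> 0" "p \<le> l"
  shows "w ^ (l - p) * w powi (- int (l + k)) = 1 / w ^ (p + k)"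
proof -
  have "w ^ (l + k) = w ^ (l - p) * w ^ (p + k)"
    using assms(2) by (simp flip: power_add)
  then show ?thesis
    using assms(1) unfolding power_int_minus power_int_of_nat by (simp add: field_simps)
qed

lemma pdiff_sum_eq_glap_series:
  assumes \<omega>: "\<omega> m \<noteq> 0" and M: "poly_wo m d M" and F: "antideriv_chain F"
  shows "(\<Sum>p = 0..lam. (-1) ^ p * real ((k + p - 1) choose p) * \<omega> m ^ (lam - p)
      * (pdiff m ^^ (2 * lam - 2 * p)) ((glap_wo \<omega> m ^^ p)
        (\<lambda>x. M x * (\<omega> m powi (- int (lam + k)) * F (2 * lam + 2 * k) (x $ m)))) x)
    = glap_series \<omega> m lam M F k x"
proof -
  let ?c = "\<omega> m powi (- int (lam + k))"
  have "(-1) ^ p * real ((k + p - 1) choose p) * \<omega> m ^ (lam - p) * (pdiff m ^^ (2 * lam - 2 * p))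
      ((glap_wo \<omega> m ^^ p) (\<lambda>x. M x * (?c * F (2 * lam + 2 * k) (x $ m)))) x
    = (glap_wo \<omega> m ^^ p) M x * (glap_coeff (\<omega> m) k p * F (2 * k + 2 * p) (x $ m))"
    if p: "p \<le> lam" for p
  proof -
    have "2 * lam + 2 * k = (2 * lam - 2 * p) + (2 * k + 2 * p)"
      using p by simp
    then have pdiff_eq: "(pdiff m ^^ (2 * lam - 2 * p)) ((glap_wo \<omega> m ^^ p)
        (\<lambda>x. M x * (?c * F (2 * lam + 2 * k) (x $ m))))
      = (\<lambda>x. (glap_wo \<omega> m ^^ p) M x * (?c * F (2 * k + 2 * p) (x $ m)))"
      by (simp only: pdiff_pow_glap_wo_pow_mult[OF M antideriv_chain_cmult[OF F]])
    have "(-1) ^ p * real ((k + p - 1) choose p) * \<omega> m ^ (lam - p) * (pdiff m ^^ (2 * lam - 2 * p))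
        ((glap_wo \<omega> m ^^ p) (\<lambda>x. M x * (?c * F (2 * lam + 2 * k) (x $ m)))) x
      = (-1) ^ p * real ((k + p - 1) choose p) * (\<omega> m ^ (lam - p) * ?c)
        * ((glap_wo \<omega> m ^^ p) M x * F (2 * k + 2 * p) (x $ m))"
      unfolding pdiff_eq by (simp only: mult_ac)
    also have "\<dots> = (glap_wo \<omega> m ^^ p) M x * (glap_coeff (\<omega> m) k p * F (2 * k + 2 * p) (x $ m))"
      unfolding power_mult_power_int_minus[OF \<omega> p] glap_coeff_def by simp
    finally show ?thesis .
  qed
  then show ?thesis
    unfolding glap_series_def atLeast0AtMost by (intro sum.cong) auto
qed

theorem corollary5p1:
  fixes \<omega> :: "'n::finite \<Rightarrow> real" and k :: nat
    and q :: "real ^ 'n \<Rightarrow> real" and f :: "real \<Rightarrow> real"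
    and m :: 'n and \<beta> :: "'n \<Rightarrow> nat" and x0 :: real
    and lam :: nat and W Q :: "real ^ 'n \<Rightarrow> real"
  assumes \<omega>_nz: "\<And>i. \<omega> i \<noteq> 0"
    and q_C1: "\<exists>D :: real ^ 'n \<Rightarrow> ((real ^ 'n) \<Rightarrow>\<^sub>L real).
                 (\<forall>x. (q has_derivative blinfun_apply (D x)) (at x)) \<and> continuous_on UNIV D"
    and q_form: "\<And>x. q x = f (x $ m) * mono_wo \<beta> m x"
    and lam_def: "lam = nat \<lceil>(real (deg_wo \<beta> m) - 1) / 2\<rceil>"
    and W_def: "W = (\<lambda>x. \<omega> m powi (- int (lam + k)) * (antideriv m x0 ^^ (2*lam + 2*k)) q x)"
    and Q_def: "Q = (\<lambda>x. \<Sum>p = 0..lam. (-1) ^ p * real ((k + p - 1) choose p) * \<omega> m ^ (lam - p)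
                     * ((pdiff m ^^ (2*lam - 2*p)) ((glap_wo \<omega> m ^^ p) W)) x)"
  shows "(\<forall>x. W x = \<omega> m powi (- int (lam + k)) * mono_wo \<beta> m x
                     * (antideriv1 x0 ^^ (2*lam + 2*k)) f (x $ m))
       \<and> (\<forall>x. Q x = (\<Sum>p = 0..lam. (-1) ^ p * real ((k + p - 1) choose p) * \<omega> m powi (- int (p + k))
                     * (antideriv m x0 ^^ (2*k + 2*p)) ((glap_wo \<omega> m ^^ p) q) x))
       \<and> (\<forall>x. (glap \<omega> ^^ k) Q x = q x)"
proof -
  let ?M = "mono_wo \<beta> m"
  define F where "F j = (antideriv1 x0 ^^ j) f" for j
  have q_eq: "q = (\<lambda>x. ?M x * f (x $ m))"
    using q_form by (auto simp: mult.commute)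
  have "continuous_on UNIV q"
    using q_C1 by (auto intro: continuous_at_imp_continuous_on has_derivative_continuous)
  then have F: "antideriv_chain F"
    unfolding F_def[abs_def] using q_form
    by (intro antideriv_chain_antideriv1 continuous_on_of_separated) auto
  have M: "poly_wo m (2 * int lam + 1) ?M"
    unfolding lam_def by (rule poly_wo_mono_wo_ceiling)
  have A: "(antideriv m x0 ^^ j) ((glap_wo \<omega> m ^^ p) q) = (\<lambda>x. (glap_wo \<omega> m ^^ p) ?M x * F j (x $ m))"
    for j p
    unfolding q_eq F_def by (rule antideriv_pow_glap_wo_pow_mult[OF M])
  have W_eq: "W = (\<lambda>x. ?M x * (\<omega> m powi (- int (lam + k)) * F (2 * lam + 2 * k) (x $ m)))"
    using A[of _ 0] by (simp add: W_def mult_ac)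
  have Q_eq: "Q = glap_series \<omega> m lam ?M F k"
    unfolding Q_def W_eq by (rule ext) (rule pdiff_sum_eq_glap_series[where \<omega> = \<omega>, OF \<omega>_nz M F])
  show ?thesis
  proof (intro conjI allI)
    fix x
    show "W x = \<omega> m powi (- int (lam + k)) * ?M x * (antideriv1 x0 ^^ (2 * lam + 2 * k)) f (x $ m)"
      by (simp add: W_eq F_def)
    show "Q x = (\<Sum>p = 0..lam. (-1) ^ p * real ((k + p - 1) choose p) * \<omega> m powi (- int (p + k))
        * (antideriv m x0 ^^ (2 * k + 2 * p)) ((glap_wo \<omega> m ^^ p) q) x)"
      unfolding Q_eq glap_series_def A glap_coeff_eq_power_int atLeast0AtMost
      by (intro sum.cong) (simp_all only: mult_ac)
    show "(glap \<omega> ^^ k) Q x = q x"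
      using glap_pow_glap_series[of \<omega> m lam ?M F k] \<omega>_nz M F by (simp add: Q_eq q_eq F_def)
  qed
qed

end
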